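(* Let $X_1,\dots,X_n$ be features and $Y$ a target that is not a.s. constant, $\mathcal{F}=\{1,\dots,n\}$. If $Y=g(X_k)$ almost surely for some function $g$ and some $k\in\mathcal{F}$ (i.e. feature $k$ is fully informative), then $\mathrm{FI}(i)\le\mathrm{FI}(k)$ for every $i\in\mathcal{F}$.
   Context: All random variables are discrete with finite support and defined on a common probability space. For discrete random variables (or random vectors) $X$ and $Y$, define $$\mathrm{UD}(X,Y):=\sum_x p_X(x)\sum_y \bigl|p_{Y\mid X=x}(y)-p_Y(y)\bigr|,$$ and, when $Y$ is not almost surely constant, $\mathrm{Dep}(X,Y):=\mathrm{UD}(X,Y)/\mathrm{UD}(Y,Y)$. Given features $X_1,\dots,X_n$ with index set $\mathcal{F}=\{1,\dots,n\}$ and $S\subseteq\mathcal{F}$, write $X_S=(X_i)_{i\in S}$ ($X_\emptyset$ constant) and $\mathrm{Dep}(S,Y):=\mathrm{Dep}(X_S,Y)$. The Berkelmans–Pries feature importance is $$\mathrm{FI}(i):=\sum_{S\subseteq\mathcal{F}\setminus\{i\}}\frac{|S|!\,(n-|S|-1)!}{n!}\bigl(\mathrm{Dep}(S\cup\{i\},Y)-\mathrm{Dep}(S,Y)\bigr).$$ *)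

theory Defs
  imports "HOL-Probability.Probability"
begin

definition prb :: "'w pmf \<Rightarrow> ('w \<Rightarrow> bool) \<Rightarrow> real" where
  "prb M P = measure_pmf.prob M {w. P w}"

text \<open>UD(X,Y): sums range over the (finite) supports of X and Y; values outside
  the support contribute zero.  p_{Y|X=x}(y) = P(X=x, Y=y) / P(X=x).\<close>
definition UD :: "'w pmf \<Rightarrow> ('w \<Rightarrow> 'c) \<Rightarrow> ('w \<Rightarrow> 'b) \<Rightarrow> real" where
  "UD M X Y = (\<Sum>x\<in>X ` set_pmf M. prb M (\<lambda>w. X w = x) *
      (\<Sum>y\<in>Y ` set_pmf M.
         \<bar>prb M (\<lambda>w. X w = x \<and> Y w = y) / prb M (\<lambda>w. X w = x) - prb M (\<lambda>w. Y w = y)\<bar>))"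

definition Dep :: "'w pmf \<Rightarrow> ('w \<Rightarrow> 'c) \<Rightarrow> ('w \<Rightarrow> 'b) \<Rightarrow> real" where
  "Dep M X Y = UD M X Y / UD M Y Y"

text \<open>X_S: the random vector (X_i)_{i in S}, as a partial map on indices (constant for S = {}).\<close>
definition XS :: "(nat \<Rightarrow> 'w \<Rightarrow> 'a) \<Rightarrow> nat set \<Rightarrow> 'w \<Rightarrow> (nat \<Rightarrow> 'a option)" where
  "XS X S = (\<lambda>w i. if i \<in> S then Some (X i w) else None)"

definition FI :: "'w pmf \<Rightarrow> nat \<Rightarrow> (nat \<Rightarrow> 'w \<Rightarrow> 'a) \<Rightarrow> ('w \<Rightarrow> 'b) \<Rightarrow> nat \<Rightarrow> real" where
  "FI M n X Y i = (\<Sum>S\<in>Pow ({1..n} - {i}).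
      (fact (card S) * fact (n - card S - 1) / fact n) *
      (Dep M (XS X (S \<union> {i})) Y - Dep M (XS X S) Y))"

end

theory Submission
  imports Defs
begin

text \<open>Write \<open>q\<^sub>y = P(Y = y)\<close>. For every feature vector \<open>Z\<close> and every value \<open>y\<close>,
  \<open>\<Sum>\<^sub>z |P(Z = z, Y = y) - P(Z = z) q\<^sub>y| \<le> 2 q\<^sub>y (1 - q\<^sub>y)\<close>, with equality when \<open>Y\<close> is a
  function of \<open>Z\<close>; hence \<open>Dep(Z, Y) \<le> Dep(Y, Y)\<close>, with equality as soon as \<open>Z\<close> contains the
  fully informative feature \<open>k\<close>. Splitting the coalitions in \<open>FI(i)\<close> and \<open>FI(k)\<close> according to
  whether they contain the other player, all terms of \<open>FI(i)\<close> whose coalition contains \<open>k\<close>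
  vanish, and \<open>FI(k) - FI(i)\<close> becomes a nonnegative combination of the gaps
  \<open>Dep(Y, Y) - Dep(S \<union> {i}, Y)\<close>.\<close>

lemma prb_cong:
  assumes "\<And>w. w \<in> set_pmf M \<Longrightarrow> P w = Q w"
  shows "prb M P = prb M Q"
proof -
  have "{w. P w} \<inter> set_pmf M = {w. Q w} \<inter> set_pmf M"
    using assms by auto
  then show ?thesis
    unfolding prb_def by (metis measure_Int_set_pmf)
qed

lemma prb_nonneg: "0 \<le> prb M P"
  unfolding prb_def by simp

lemma prb_mono: "(\<And>w. P w \<Longrightarrow> Q w) \<Longrightarrow> prb M P \<le> prb M Q"
  unfolding prb_def by (intro measure_pmf.finite_measure_mono) auto

lemma prb_pos: "w \<in> set_pmf M \<Longrightarrow> P w \<Longrightarrow> 0 < prb M P"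
  unfolding prb_def by (rule measure_pmf_posI) auto

lemma sum_prb_image_conj:
  assumes "finite (Z ` set_pmf M)"
  shows "(\<Sum>z\<in>Z ` set_pmf M. prb M (\<lambda>w. Z w = z \<and> Q w)) = prb M Q"
proof -
  have "(\<Sum>z\<in>Z ` set_pmf M. prb M (\<lambda>w. Z w = z \<and> Q w))
      = measure_pmf.prob M (\<Union>z\<in>Z ` set_pmf M. {w. Z w = z \<and> Q w})"
    unfolding prb_def using assms
    by (intro measure_pmf.finite_measure_finite_Union[symmetric]) (auto simp: disjoint_family_on_def)
  also have "\<dots> = prb M (\<lambda>w. Z w \<in> Z ` set_pmf M \<and> Q w)"
    unfolding prb_def by (rule arg_cong[where f = "measure_pmf.prob M"]) auto
  also have "\<dots> = prb M Q"
    by (rule prb_cong) auto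
  finally show ?thesis .
qed

lemma sum_prb_image:
  "finite (Z ` set_pmf M) \<Longrightarrow> (\<Sum>z\<in>Z ` set_pmf M. prb M (\<lambda>w. Z w = z)) = 1"
  using sum_prb_image_conj[where Q = "\<lambda>_. True"] by (simp add: prb_def)

lemma sum_abs_deviation_eq_pos_part:
  fixes a p :: "'z \<Rightarrow> real"
  assumes "(\<Sum>z\<in>A. a z) = q" and "(\<Sum>z\<in>A. p z) = 1"
  shows "(\<Sum>z\<in>A. \<bar>a z - p z * q\<bar>) = 2 * (\<Sum>z\<in>A. max (a z - p z * q) 0)"
proof -
  have "(\<Sum>z\<in>A. a z - p z * q) = 0"
    using assms by (simp add: sum_subtractf sum_distrib_right[symmetric])
  moreover have "\<bar>d\<bar> = 2 * max d 0 - d" for d :: real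
    by auto
  ultimately show ?thesis
    by (simp add: sum_subtractf sum_distrib_left)
qed

lemma sum_abs_deviation_le:
  fixes a p :: "'z \<Rightarrow> real"
  assumes ap: "\<And>z. z \<in> A \<Longrightarrow> 0 \<le> a z \<and> a z \<le> p z"
    and sa: "(\<Sum>z\<in>A. a z) = q" and sp: "(\<Sum>z\<in>A. p z) = 1"
  shows "(\<Sum>z\<in>A. \<bar>a z - p z * q\<bar>) \<le> 2 * q * (1 - q)"
proof -
  have "0 \<le> q"
    unfolding sa[symmetric] using ap by (intro sum_nonneg) blast
  have "q \<le> 1"
    unfolding sa[symmetric] sp[symmetric] using ap by (intro sum_mono) blast
  have "(\<Sum>z\<in>A. max (a z - p z * q) 0) \<le> (\<Sum>z\<in>A. a z * (1 - q))"
  proof (rule sum_mono)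
    fix z assume "z \<in> A"
    with ap have "0 \<le> a z" "a z \<le> p z"
      by auto
    with \<open>0 \<le> q\<close> \<open>q \<le> 1\<close> have "a z * q \<le> p z * q" and "0 \<le> a z * (1 - q)"
      by (auto intro: mult_right_mono)
    then show "max (a z - p z * q) 0 \<le> a z * (1 - q)"
      by (simp add: algebra_simps)
  qed
  also have "\<dots> = q * (1 - q)"
    using sa by (simp add: sum_distrib_right[symmetric])
  finally show ?thesis
    using sum_abs_deviation_eq_pos_part[OF sa sp] by simp
qed

lemma sum_abs_deviation_eq:
  fixes a p :: "'z \<Rightarrow> real"
  assumes ap: "\<And>z. z \<in> A \<Longrightarrow> 0 \<le> a z \<and> a z \<le> p z"
    and a01: "\<And>z. z \<in> A \<Longrightarrow> a z = 0 \<or> a z = p z"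
    and sa: "(\<Sum>z\<in>A. a z) = q" and sp: "(\<Sum>z\<in>A. p z) = 1"
  shows "(\<Sum>z\<in>A. \<bar>a z - p z * q\<bar>) = 2 * q * (1 - q)"
proof -
  have "0 \<le> q"
    unfolding sa[symmetric] using ap by (intro sum_nonneg) blast
  have "q \<le> 1"
    unfolding sa[symmetric] sp[symmetric] using ap by (intro sum_mono) blast
  have "(\<Sum>z\<in>A. max (a z - p z * q) 0) = (\<Sum>z\<in>A. a z * (1 - q))"
  proof (rule sum.cong[OF refl])
    fix z assume "z \<in> A"
    with ap have "0 \<le> p z"
      by force
    with \<open>0 \<le> q\<close> \<open>q \<le> 1\<close> have "0 \<le> p z * q" and "0 \<le> p z * (1 - q)"
      by simp_all
    with a01[OF \<open>z \<in> A\<close>] show "max (a z - p z * q) 0 = a z * (1 - q)"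
      by (auto simp: algebra_simps)
  qed
  also have "\<dots> = q * (1 - q)"
    using sa by (simp add: sum_distrib_right[symmetric])
  finally show ?thesis
    using sum_abs_deviation_eq_pos_part[OF sa sp] by simp
qed

lemma UD_eq_sum_abs_joint_minus_product:
  "UD M Z Y = (\<Sum>y\<in>Y ` set_pmf M. \<Sum>z\<in>Z ` set_pmf M.
     \<bar>prb M (\<lambda>w. Z w = z \<and> Y w = y) - prb M (\<lambda>w. Z w = z) * prb M (\<lambda>w. Y w = y)\<bar>)"
proof -
  have "prb M (\<lambda>w. Z w = z) * \<bar>j / prb M (\<lambda>w. Z w = z) - q\<bar> = \<bar>j - prb M (\<lambda>w. Z w = z) * q\<bar>"
    if "z \<in> Z ` set_pmf M" for z j q
  proof -
    have pos: "0 < prb M (\<lambda>w. Z w = z)"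
      using that by (auto intro: prb_pos)
    then have "prb M (\<lambda>w. Z w = z) * \<bar>j / prb M (\<lambda>w. Z w = z) - q\<bar>
        = \<bar>prb M (\<lambda>w. Z w = z) * (j / prb M (\<lambda>w. Z w = z) - q)\<bar>"
      by (simp add: abs_mult)
    also have "\<dots> = \<bar>j - prb M (\<lambda>w. Z w = z) * q\<bar>"
      using pos by (simp add: right_diff_distrib)
    finally show ?thesis .
  qed
  then show ?thesis
    unfolding UD_def sum_distrib_left by (simp add: sum.swap[of _ "Z ` set_pmf M"])
qed

definition max_UD :: "'w pmf \<Rightarrow> ('w \<Rightarrow> 'b) \<Rightarrow> real" where
  "max_UD M Y = (\<Sum>y\<in>Y ` set_pmf M. 2 * prb M (\<lambda>w. Y w = y) * (1 - prb M (\<lambda>w. Y w = y)))"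

lemma max_UD_nonneg: "0 \<le> max_UD M Y"
  unfolding max_UD_def by (intro sum_nonneg mult_nonneg_nonneg) (auto simp: prb_nonneg prb_def)

lemma UD_le_max_UD:
  assumes fin: "finite (Z ` set_pmf M)"
  shows "UD M Z Y \<le> max_UD M Y"
  unfolding UD_eq_sum_abs_joint_minus_product max_UD_def
  by (intro sum_mono sum_abs_deviation_le)
    (auto intro!: prb_mono simp: prb_nonneg sum_prb_image_conj[OF fin] sum_prb_image[OF fin])

lemma UD_eq_max_UD_if_determined:
  assumes fin: "finite (Z ` set_pmf M)"
    and h: "\<And>w. w \<in> set_pmf M \<Longrightarrow> Y w = h (Z w)"
  shows "UD M Z Y = max_UD M Y"
  unfolding UD_eq_sum_abs_joint_minus_product max_UD_def
proof (intro sum.cong sum_abs_deviation_eq)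
  fix y z
  have "prb M (\<lambda>w. Z w = z \<and> Y w = y) = prb M (\<lambda>w. Z w = z \<and> h z = y)"
    by (rule prb_cong) (auto simp: h)
  then show "prb M (\<lambda>w. Z w = z \<and> Y w = y) = 0 \<or>
      prb M (\<lambda>w. Z w = z \<and> Y w = y) = prb M (\<lambda>w. Z w = z)"
    by (cases "h z = y") (simp_all add: prb_def)
qed (auto intro!: prb_mono simp: prb_nonneg sum_prb_image_conj[OF fin] sum_prb_image[OF fin])

lemma UD_self: "finite (Y ` set_pmf M) \<Longrightarrow> UD M Y Y = max_UD M Y"
  by (rule UD_eq_max_UD_if_determined[where h = id]) simp_all

lemma Dep_le_Dep_self:
  assumes "finite (Z ` set_pmf M)" and "finite (Y ` set_pmf M)"
  shows "Dep M Z Y \<le> Dep M Y Y"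
  unfolding Dep_def UD_self[OF assms(2)]
  by (intro divide_right_mono UD_le_max_UD[OF assms(1)] max_UD_nonneg)

lemma Dep_eq_Dep_self_if_determined:
  assumes "finite (Z ` set_pmf M)" and "finite (Y ` set_pmf M)"
    and "\<And>w. w \<in> set_pmf M \<Longrightarrow> Y w = h (Z w)"
  shows "Dep M Z Y = Dep M Y Y"
  using UD_eq_max_UD_if_determined[where h = h, OF assms(1,3)] UD_self[OF assms(2)]
  by (simp add: Dep_def)

lemma finite_XS_image:
  assumes "finite S" and "\<And>i. i \<in> S \<Longrightarrow> finite (X i ` set_pmf M)"
  shows "finite (XS X S ` set_pmf M)"
proof -
  let ?embed = "\<lambda>f i. if i \<in> S then Some (f i) else None"
  have "XS X S ` set_pmf M \<subseteq> ?embed ` PiE S (\<lambda>i. X i ` set_pmf M)"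
  proof (rule image_subsetI)
    fix w assume "w \<in> set_pmf M"
    then have "restrict (\<lambda>i. X i w) S \<in> PiE S (\<lambda>i. X i ` set_pmf M)"
      by auto
    moreover have "XS X S w = ?embed (restrict (\<lambda>i. X i w) S)"
      by (auto simp: XS_def)
    ultimately show "XS X S w \<in> ?embed ` PiE S (\<lambda>i. X i ` set_pmf M)"
      by blast
  qed
  moreover have "finite (PiE S (\<lambda>i. X i ` set_pmf M))"
    using assms by (intro finite_PiE) auto
  ultimately show ?thesis
    by (meson finite_imageI finite_subset)
qed

definition marginal_sum :: "'a set \<Rightarrow> (nat \<Rightarrow> real) \<Rightarrow> ('a set \<Rightarrow> real) \<Rightarrow> 'a \<Rightarrow> real" where
  "marginal_sum F wt v i = (\<Sum>S\<in>Pow (F - {i}). wt (card S) * (v (S \<union> {i}) - v S))"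

lemma sum_Pow_insert:
  assumes "finite A" and "a \<notin> A"
  shows "sum f (Pow (insert a A)) = sum f (Pow A) + (\<Sum>S\<in>Pow A. f (insert a S))"
proof -
  have "sum f (Pow (insert a A)) = sum f (Pow A) + sum f (insert a ` Pow A)"
    unfolding Pow_insert using assms by (intro sum.union_disjoint) auto
  also have "sum f (insert a ` Pow A) = (\<Sum>S\<in>Pow A. f (insert a S))"
    using assms(2) by (intro sum.reindex_cong[OF _ refl refl]) (auto simp: inj_on_def)
  finally show ?thesis .
qed

lemma marginal_sum_split:
  assumes "finite F" and "j \<in> F" and "i \<noteq> j"
  shows "marginal_sum F wt v i = (\<Sum>S\<in>Pow (F - {i, j}).
      wt (card S) * (v (S \<union> {i}) - v S)
      + wt (card S + 1) * (v (insert j S \<union> {i}) - v (insert j S)))"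
proof -
  have F: "F - {i} = insert j (F - {i, j})"
    using assms by auto
  have "card (insert j S) = card S + 1" if "S \<in> Pow (F - {i, j})" for S
  proof -
    from that assms(1) have "finite S" and "j \<notin> S"
      by (auto intro: finite_subset)
    then show ?thesis
      by simp
  qed
  then show ?thesis
    unfolding marginal_sum_def F using assms(1)
    by (simp add: sum_Pow_insert sum.distrib)
qed

text \<open>A player \<open>k\<close> that lifts every coalition to the maximal value \<open>c\<close> gets at least the
  weighted marginal sum of any other player \<open>i\<close>: pairing the coalitions \<open>S\<close> and
  \<open>S \<union> {k}\<close> of \<open>i\<close> with \<open>S\<close> and \<open>S \<union> {i}\<close> of \<open>k\<close> compares the sums term by term.\<close>
lemma marginal_sum_le_of_saturating:
  assumes "finite F" and "i \<in> F" and "k \<in> F"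
    and wt: "\<And>s. 0 \<le> wt s"
    and le: "\<And>T. T \<subseteq> F \<Longrightarrow> v T \<le> c"
    and eq: "\<And>T. T \<subseteq> F \<Longrightarrow> k \<in> T \<Longrightarrow> v T = c"
  shows "marginal_sum F wt v i \<le> marginal_sum F wt v k"
proof (cases "i = k")
  case False
  have "wt (card S) * (v (S \<union> {i}) - v S)
      + wt (card S + 1) * (v (insert k S \<union> {i}) - v (insert k S))
    \<le> wt (card S) * (v (S \<union> {k}) - v S)
      + wt (card S + 1) * (v (insert i S \<union> {k}) - v (insert i S))"
    if "S \<in> Pow (F - {i, k})" for S
  proof -
    have "v (S \<union> {i}) \<le> c"
      using that assms(2) by (intro le) auto
    moreover have "v (insert k S \<union> {i}) = c" "v (insert k S) = c" "v (S \<union> {k}) = c"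
      "v (insert i S \<union> {k}) = c"
      using that assms(2,3) by (auto intro!: eq)
    moreover have "wt (card S) * (v (S \<union> {i}) - v S) \<le> wt (card S) * (c - v S)"
      using \<open>v (S \<union> {i}) \<le> c\<close> wt by (intro mult_left_mono) auto
    moreover have "0 \<le> wt (card S + 1) * (c - v (S \<union> {i}))"
      using \<open>v (S \<union> {i}) \<le> c\<close> wt by simp
    ultimately show ?thesis
      by simp
  qed
  then have "(\<Sum>S\<in>Pow (F - {i, k}). wt (card S) * (v (S \<union> {i}) - v S)
        + wt (card S + 1) * (v (insert k S \<union> {i}) - v (insert k S)))
    \<le> (\<Sum>S\<in>Pow (F - {i, k}). wt (card S) * (v (S \<union> {k}) - v S)
        + wt (card S + 1) * (v (insert i S \<union> {k}) - v (insert i S)))"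
    by (rule sum_mono)
  moreover have "k \<noteq> i" and "{k, i} = {i, k}"
    using False by auto
  ultimately show ?thesis
    unfolding marginal_sum_split[OF assms(1,3) False] marginal_sum_split[OF assms(1,2) \<open>k \<noteq> i\<close>]
    by simp
qed simp

theorem mainTheorem11:
  fixes M :: "'w pmf" and n :: nat and X :: "nat \<Rightarrow> 'w \<Rightarrow> 'a" and Y :: "'w \<Rightarrow> 'b"
    and g :: "'a \<Rightarrow> 'b" and k :: nat
  assumes finX: "\<And>i. i \<in> {1..n} \<Longrightarrow> finite (X i ` set_pmf M)"
    and finY: "finite (Y ` set_pmf M)"
    and Ync: "\<not> (\<exists>c. AE w in measure_pmf M. Y w = c)"
    and k: "k \<in> {1..n}"
    and g: "AE w in measure_pmf M. Y w = g (X k w)"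
    and i: "i \<in> {1..n}"
  shows "FI M n X Y i \<le> FI M n X Y k"
proof -
  let ?wt = "\<lambda>s. fact s * fact (n - s - 1) / fact n :: real"
  let ?v = "\<lambda>T. Dep M (XS X T) Y"
  have fin: "finite (XS X T ` set_pmf M)" if T: "T \<subseteq> {1..n}" for T
    by (rule finite_XS_image) (use finite_subset[OF T] finX T in auto)
  have "marginal_sum {1..n} ?wt ?v i \<le> marginal_sum {1..n} ?wt ?v k"
  proof (rule marginal_sum_le_of_saturating)
    show "?v T \<le> Dep M Y Y" if "T \<subseteq> {1..n}" for T
      using Dep_le_Dep_self[OF fin[OF that] finY] .
    show "?v T = Dep M Y Y" if "T \<subseteq> {1..n}" and "k \<in> T" for T
      using g that
      by (intro Dep_eq_Dep_self_if_determined[OF fin[OF that(1)] finY, where h = "\<lambda>f. g (the (f k))"])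
        (simp add: AE_measure_pmf_iff XS_def)
  qed (use i k in auto)
  then show ?thesis
    by (simp add: FI_def marginal_sum_def)
qed

end
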